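(* Let $J\ge 1$ and $K_1,\dots,K_J\ge 1$. For $j=1,\dots,J$ let $\mathbf{z}_j$ be a continuous latent variable and $c_j\in\{1,\dots,K_j\}$ a discrete variable. Write $\vec{\mathbf{z}}=(\mathbf{z}_1,\dots,\mathbf{z}_J)$ and $\mathbf{c}=(c_1,\dots,c_J)\in\mathcal{C}:=\prod_{j=1}^J\{1,\dots,K_j\}$. Suppose the prior factorises as $p_\theta(\vec{\mathbf{z}},\mathbf{c})=\prod_{j=1}^J p_\theta(\mathbf{z}_j,c_j)$, with $p_\theta(\mathbf{z}_j,c_j)=p_\theta(\mathbf{z}_j\mid c_j)p_\theta(c_j)$, and let $p_\theta(\mathbf{c}\mid\vec{\mathbf{z}})$ and $p_\theta(c_j\mid\mathbf{z}_j)$ be the corresponding posteriors. Fix an input $\mathbf{x}$ and let $q_\phi(\vec{\mathbf{z}}\mid\mathbf{x})=\prod_{j=1}^J q_\phi(\mathbf{z}_j\mid\mathbf{x})$ be any factorised probability distribution over $\vec{\mathbf{z}}$. For each $j$ define $$Z_j(q_\phi(\mathbf{z}_j\mid\mathbf{x})):=\sum_{c_j=1}^{K_j}\exp\left(\mathbb{E}_{q_\phi(\mathbf{z}_j\mid\mathbf{x})}\log p_\theta(c_j\mid\mathbf{z}_j)\right),\qquad \pi_j(c_j\mid q_\phi(\mathbf{z}_j\mid\mathbf{x})):=\frac{\exp\left(\mathbb{E}_{q_\phi(\mathbf{z}_j\mid\mathbf{x})}\log p_\theta(c_j\mid\mathbf{z}_j)\right)}{Z_j(q_\phi(\mathbf{z}_j\mid\mathbf{x}))}$$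 for $c_j=1,\dots,K_j$. Then, over all probability distributions $q_\phi(\mathbf{c}\mid\mathbf{x})$ on $\mathcal{C}$, the quantity $\mathbb{E}_{q_\phi(\vec{\mathbf{z}}\mid\mathbf{x})}\mathrm{KL}\left[q_\phi(\mathbf{c}\mid\mathbf{x})\,\|\,p_\theta(\mathbf{c}\mid\vec{\mathbf{z}})\right]$ is minimised by $q_\phi(\mathbf{c}\mid\mathbf{x})=\prod_{j=1}^J\pi_j(c_j\mid q_\phi(\mathbf{z}_j\mid\mathbf{x}))$, and its minimum value is $-\sum_{j=1}^J\log Z_j(q_\phi(\mathbf{z}_j\mid\mathbf{x}))$.
   Context: $\mathrm{KL}[q\|p]=\sum_{\mathbf{c}} q(\mathbf{c})\log\frac{q(\mathbf{c})}{p(\mathbf{c})}$ is the Kullback–Leibler divergence between distributions on the finite set $\mathcal{C}$. The expectations $\mathbb{E}_{q_\phi(\mathbf{z}_j\mid\mathbf{x})}\log p_\theta(c_j\mid\mathbf{z}_j)$ are assumed to be well defined and finite for all $j$ and $c_j$. *)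

theory Defs
  imports "HOL-Probability.Probability"
begin

text \<open>Index set of the J factors: j ranges over {0..<J}; the discrete variable c_j
  ranges over {1..K j}. Configurations c are elements of the finite set
  C = Pi_E {0..<J} (\<lambda>j. {1..K j}).\<close>

definition config_set :: "nat \<Rightarrow> (nat \<Rightarrow> nat) \<Rightarrow> (nat \<Rightarrow> nat) set" where
  "config_set J K = PiE {0..<J} (\<lambda>j. {1..K j})"

text \<open>KL divergence between two distributions on a finite set C
  (convention 0 * log(0/p) = 0 is automatic since 0 * x = 0).\<close>
definition KL_fin :: "'c set \<Rightarrow> ('c \<Rightarrow> real) \<Rightarrow> ('c \<Rightarrow> real) \<Rightarrow> real" where
  "KL_fin C q p = (\<Sum>c\<in>C. q c * ln (q c / p c))"

definition is_distr :: "'c set \<Rightarrow> ('c \<Rightarrow> real) \<Rightarrow> bool" where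
  "is_distr C q \<longleftrightarrow> (\<forall>c\<in>C. 0 \<le> q c) \<and> (\<Sum>c\<in>C. q c) = 1"

text \<open>Per-factor posterior p(c_j | z_j) by Bayes, from the conditional density
  lik j c z = p(z_j = z | c_j = c) and the prior pc j c = p(c_j = c).\<close>
definition post_j :: "(nat \<Rightarrow> nat) \<Rightarrow> (nat \<Rightarrow> nat \<Rightarrow> 'a \<Rightarrow> real) \<Rightarrow> (nat \<Rightarrow> nat \<Rightarrow> real)
    \<Rightarrow> nat \<Rightarrow> nat \<Rightarrow> 'a \<Rightarrow> real" where
  "post_j K lik pc j c z = lik j c z * pc j c / (\<Sum>c'\<in>{1..K j}. lik j c' z * pc j c')"

definition post_joint :: "nat \<Rightarrow> (nat \<Rightarrow> nat) \<Rightarrow> (nat \<Rightarrow> nat \<Rightarrow> 'a \<Rightarrow> real) \<Rightarrow> (nat \<Rightarrow> nat \<Rightarrow> real)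
    \<Rightarrow> (nat \<Rightarrow> 'a) \<Rightarrow> (nat \<Rightarrow> nat) \<Rightarrow> real" where
  "post_joint J K lik pc zv c =
     (\<Prod>j<J. lik j (c j) (zv j) * pc j (c j)) /
     (\<Sum>c'\<in>config_set J K. \<Prod>j<J. lik j (c' j) (zv j) * pc j (c' j))"

definition Zj :: "(nat \<Rightarrow> nat) \<Rightarrow> (nat \<Rightarrow> nat \<Rightarrow> 'a \<Rightarrow> real) \<Rightarrow> (nat \<Rightarrow> nat \<Rightarrow> real)
    \<Rightarrow> (nat \<Rightarrow> 'a measure) \<Rightarrow> nat \<Rightarrow> real" where
  "Zj K lik pc q j = (\<Sum>c\<in>{1..K j}. exp (\<integral>z. ln (post_j K lik pc j c z) \<partial>(q j)))"

definition pij :: "(nat \<Rightarrow> nat) \<Rightarrow> (nat \<Rightarrow> nat \<Rightarrow> 'a \<Rightarrow> real) \<Rightarrow> (nat \<Rightarrow> nat \<Rightarrow> real)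
    \<Rightarrow> (nat \<Rightarrow> 'a measure) \<Rightarrow> nat \<Rightarrow> nat \<Rightarrow> real" where
  "pij K lik pc q j c = exp (\<integral>z. ln (post_j K lik pc j c z) \<partial>(q j)) / Zj K lik pc q j"

definition objective :: "nat \<Rightarrow> (nat \<Rightarrow> nat) \<Rightarrow> (nat \<Rightarrow> nat \<Rightarrow> 'a \<Rightarrow> real) \<Rightarrow> (nat \<Rightarrow> nat \<Rightarrow> real)
    \<Rightarrow> (nat \<Rightarrow> 'a measure) \<Rightarrow> ((nat \<Rightarrow> nat) \<Rightarrow> real) \<Rightarrow> real" where
  "objective J K lik pc q Q =
     (\<integral>zv. KL_fin (config_set J K) Q (post_joint J K lik pc zv) \<partial>(PiM {0..<J} q))"

end

theory Submission
  imports Defs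
begin

text \<open>The joint posterior is the product of the factor posteriors, so a.e.
  \<open>ln p(c | z) = \<Sum>\<^sub>j ln p(c\<^sub>j | z\<^sub>j)\<close>; integrating against the product measure \<open>q(z | x)\<close>
  turns the objective into \<open>\<Sum>\<^sub>c Q c ln Q c - \<Sum>\<^sub>c Q c \<Sum>\<^sub>j E ln p(c\<^sub>j | z\<^sub>j)\<close>.
  As \<open>\<Sum>\<^sub>j E ln p(c\<^sub>j | z\<^sub>j) = ln \<pi>(c) + \<Sum>\<^sub>j ln Z\<^sub>j\<close> for the product \<open>\<pi>\<close> of the \<open>\<pi>\<^sub>j\<close>,
  the objective is \<open>KL[Q \<parallel> \<pi>] - \<Sum>\<^sub>j ln Z\<^sub>j\<close>, and Gibbs' inequality finishes the proof.\<close>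

lemma
  fixes f :: "'a \<Rightarrow> 'b::{banach, second_countable_topology}"
  assumes "\<And>i. i \<in> I \<Longrightarrow> prob_space (M i)" and "i \<in> I" and "integrable (M i) f"
  shows integrable_PiM_component: "integrable (PiM I M) (\<lambda>x. f (x i))"
    and integral_PiM_component: "(\<integral>x. f (x i) \<partial>PiM I M) = integral\<^sup>L (M i) f"
proof -
  have component: "(\<lambda>x. x i) \<in> measurable (PiM I M) (M i)"
    using \<open>i \<in> I\<close> by (rule measurable_component_singleton)
  have f: "f \<in> borel_measurable (M i)"
    using \<open>integrable (M i) f\<close> by auto
  have distr: "distr (PiM I M) (M i) (\<lambda>x. x i) = M i"
    using assms(1,2) by (rule distr_PiM_component)
  show "integrable (PiM I M) (\<lambda>x. f (x i))"
    using integrable_distr_eq[OF component f] distr assms(3) by simp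
  show "(\<integral>x. f (x i) \<partial>PiM I M) = integral\<^sup>L (M i) f"
    using integral_distr[OF component f] distr by simp
qed

lemma
  fixes g :: "'i \<Rightarrow> 'a \<Rightarrow> 'b::{banach, second_countable_topology}"
  assumes "\<And>i. i \<in> I \<Longrightarrow> prob_space (M i)" and "S \<subseteq> I"
    and "\<And>i. i \<in> S \<Longrightarrow> integrable (M i) (g i)"
  shows integrable_PiM_sum_components: "integrable (PiM I M) (\<lambda>x. \<Sum>i\<in>S. g i (x i))"
    and integral_PiM_sum_components: "(\<integral>x. (\<Sum>i\<in>S. g i (x i)) \<partial>PiM I M) = (\<Sum>i\<in>S. integral\<^sup>L (M i) (g i))"
  using assms integrable_PiM_component[of I M _ "g _"] integral_PiM_component[of I M _ "g _"]
  by (auto simp: subset_iff intro!: sum.cong)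

lemma finite_config_set: "finite (config_set J K)"
  unfolding config_set_def by (auto intro: finite_PiE)

lemma config_set_component: "c \<in> config_set J K \<Longrightarrow> j < J \<Longrightarrow> c j \<in> {1..K j}"
  unfolding config_set_def by (auto simp: PiE_iff)

lemma sum_config_set_prod:
  fixes g :: "nat \<Rightarrow> nat \<Rightarrow> 'b::comm_semiring_1"
  shows "(\<Sum>c\<in>config_set J K. \<Prod>j<J. g j (c j)) = (\<Prod>j<J. \<Sum>x\<in>{1..K j}. g j x)"
  unfolding config_set_def atLeast0LessThan
  using prod_sum_PiE[of "{..<J}" "\<lambda>j. {1..K j}" g] by simp

lemma post_joint_eq_prod_post_j:
  "post_joint J K lik pc zv c = (\<Prod>j<J. post_j K lik pc j (c j) (zv j))"
  unfolding post_joint_def post_j_def prod_dividef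
  using sum_config_set_prod[of "\<lambda>j x. lik j x (zv j) * pc j x"] by simp

lemma measurable_post_j:
  assumes "\<And>c. c \<in> {1..K j} \<Longrightarrow> lik j c \<in> borel_measurable M" and "c \<in> {1..K j}"
  shows "post_j K lik pc j c \<in> borel_measurable M"
  unfolding post_j_def using assms by measurable

lemma KL_fin_self: "KL_fin C p p = 0"
  unfolding KL_fin_def by (intro sum.neutral) simp

lemma KL_fin_eq_diff_cross_entropy:
  assumes "\<And>c. c \<in> C \<Longrightarrow> 0 \<le> q c" and "\<And>c. c \<in> C \<Longrightarrow> 0 < p c"
  shows "KL_fin C q p = (\<Sum>c\<in>C. q c * ln (q c)) - (\<Sum>c\<in>C. q c * ln (p c))"
proof -
  have "q c * ln (q c / p c) = q c * ln (q c) - q c * ln (p c)" if "c \<in> C" for c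
    using assms[OF that] by (cases "q c = 0") (auto simp: ln_div right_diff_distrib)
  then show ?thesis
    unfolding KL_fin_def by (simp add: sum_subtractf)
qed

lemma KL_fin_nonneg:
  assumes "finite C" and "is_distr C q" and "\<And>c. c \<in> C \<Longrightarrow> 0 < p c" and "sum p C \<le> 1"
  shows "0 \<le> KL_fin C q p"
proof -
  have termwise: "q c - p c \<le> q c * ln (q c / p c)" if "c \<in> C" for c
  proof (cases "q c = 0")
    case True
    then show ?thesis using assms(3)[OF that] by simp
  next
    case False
    then have "0 < q c"
      using assms(2) that unfolding is_distr_def by force
    have "ln (p c / q c) \<le> p c / q c - 1"
      using \<open>0 < q c\<close> assms(3)[OF that] by (intro ln_le_minus_one) simp
    then have "q c * ln (p c / q c) \<le> p c - q c"
      using \<open>0 < q c\<close> by (simp add: field_simps mult_left_mono)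
    then show ?thesis
      using \<open>0 < q c\<close> assms(3)[OF that] by (simp add: ln_div algebra_simps)
  qed
  have "0 \<le> (\<Sum>c\<in>C. q c - p c)"
    using assms(2,4) unfolding is_distr_def by (simp add: sum_subtractf)
  also have "\<dots> \<le> KL_fin C q p"
    unfolding KL_fin_def using termwise by (rule sum_mono)
  finally show ?thesis .
qed

locale factorised_posterior =
  fixes J :: nat and K :: "nat \<Rightarrow> nat"
    and lik :: "nat \<Rightarrow> nat \<Rightarrow> 'a \<Rightarrow> real"
    and pc :: "nat \<Rightarrow> nat \<Rightarrow> real"
    and q :: "nat \<Rightarrow> 'a measure"
  assumes K_pos: "\<And>j. j < J \<Longrightarrow> 1 \<le> K j"
    and lik_measurable: "\<And>j c. j < J \<Longrightarrow> c \<in> {1..K j} \<Longrightarrow> lik j c \<in> borel_measurable (q j)"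
    and prob_space_q: "\<And>j. j < J \<Longrightarrow> prob_space (q j)"
    and AE_post_j_pos: "\<And>j c. j < J \<Longrightarrow> c \<in> {1..K j} \<Longrightarrow> AE z in q j. 0 < post_j K lik pc j c z"
    and integrable_ln_post_j: "\<And>j c. j < J \<Longrightarrow> c \<in> {1..K j} \<Longrightarrow>
      integrable (q j) (\<lambda>z. ln (post_j K lik pc j c z))"
begin

definition expected_ln_post_j :: "nat \<Rightarrow> nat \<Rightarrow> real" where
  "expected_ln_post_j j c = (\<integral>z. ln (post_j K lik pc j c z) \<partial>q j)"

definition mean_field :: "(nat \<Rightarrow> nat) \<Rightarrow> real" where
  "mean_field c = (\<Prod>j<J. pij K lik pc q j (c j))"

abbreviation log_normaliser :: real where
  "log_normaliser \<equiv> \<Sum>j<J. ln (Zj K lik pc q j)"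

lemma Zj_eq: "Zj K lik pc q j = (\<Sum>c\<in>{1..K j}. exp (expected_ln_post_j j c))"
  unfolding Zj_def expected_ln_post_j_def ..

lemma pij_eq: "pij K lik pc q j c = exp (expected_ln_post_j j c) / Zj K lik pc q j"
  unfolding pij_def expected_ln_post_j_def ..

lemma Zj_pos: "j < J \<Longrightarrow> 0 < Zj K lik pc q j"
  unfolding Zj_eq using K_pos by (intro sum_pos) auto

lemma sum_pij: "j < J \<Longrightarrow> (\<Sum>c\<in>{1..K j}. pij K lik pc q j c) = 1"
  using Zj_pos[of j] unfolding pij_eq sum_divide_distrib[symmetric] Zj_eq by simp

lemma mean_field_pos: "0 < mean_field c"
  unfolding mean_field_def pij_eq using Zj_pos by (intro prod_pos) auto

lemma mean_field_is_distr: "is_distr (config_set J K) mean_field"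
proof -
  have "sum mean_field (config_set J K) = (\<Prod>j<J. \<Sum>x\<in>{1..K j}. pij K lik pc q j x)"
    unfolding mean_field_def by (rule sum_config_set_prod)
  also have "\<dots> = 1"
    using sum_pij by simp
  finally show ?thesis
    unfolding is_distr_def using mean_field_pos by (simp add: less_imp_le)
qed

lemma ln_mean_field: "ln (mean_field c) = (\<Sum>j<J. expected_ln_post_j j (c j)) - log_normaliser"
proof -
  have "ln (mean_field c) = (\<Sum>j<J. ln (exp (expected_ln_post_j j (c j)) / Zj K lik pc q j))"
    unfolding mean_field_def pij_eq by (intro ln_prod) (auto dest: Zj_pos)
  also have "\<dots> = (\<Sum>j<J. expected_ln_post_j j (c j) - ln (Zj K lik pc q j))"
    by (intro sum.cong refl) (auto simp: ln_div dest: Zj_pos)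
  finally show ?thesis
    by (simp add: sum_subtractf)
qed

lemma prob_space_PiM_q: "prob_space (PiM {0..<J} q)"
  using prob_space_q by (intro prob_space_PiM) auto

lemma measurable_post_joint:
  assumes "c \<in> config_set J K"
  shows "(\<lambda>zv. post_joint J K lik pc zv c) \<in> borel_measurable (PiM {0..<J} q)"
  unfolding post_joint_eq_prod_post_j
  using assms config_set_component lik_measurable
  by (intro borel_measurable_prod measurable_compose[OF measurable_component_singleton measurable_post_j]) auto

lemma AE_post_j_pos_components:
  "AE zv in PiM {0..<J} q. \<forall>j\<in>{..<J}. \<forall>c\<in>{1..K j}. 0 < post_j K lik pc j c (zv j)"
  by (intro eventually_ball_finite ballI AE_PiM_component[of "{0..<J}"] prob_space_q AE_post_j_pos) auto

lemma AE_ln_post_joint_eq_sum: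
  assumes "c \<in> config_set J K"
  shows "AE zv in PiM {0..<J} q.
    ln (post_joint J K lik pc zv c) = (\<Sum>j<J. ln (post_j K lik pc j (c j) (zv j)))"
  using AE_post_j_pos_components
proof eventually_elim
  case (elim zv)
  then have pos: "0 < post_j K lik pc j (c j) (zv j)" if "j < J" for j
    using assms config_set_component that by blast
  show ?case
    unfolding post_joint_eq_prod_post_j by (intro ln_prod) (auto dest: pos)
qed

lemma
  assumes "c \<in> config_set J K"
  shows integrable_ln_post_joint:
      "integrable (PiM {0..<J} q) (\<lambda>zv. ln (post_joint J K lik pc zv c))"
    and integral_ln_post_joint:
      "(\<integral>zv. ln (post_joint J K lik pc zv c) \<partial>PiM {0..<J} q) = (\<Sum>j<J. expected_ln_post_j j (c j))"
proof -
  let ?M = "PiM {0..<J} q" and ?f = "\<lambda>j z. ln (post_j K lik pc j (c j) z)"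
  have integrable_f: "integrable (q j) (?f j)" if "j \<in> {..<J}" for j
    using that assms config_set_component integrable_ln_post_j by blast
  have measurable: "(\<lambda>zv. ln (post_joint J K lik pc zv c)) \<in> borel_measurable ?M"
    using measurable_post_joint[OF assms] by (rule borel_measurable_ln)
  have integrable_sum: "integrable ?M (\<lambda>zv. \<Sum>j<J. ?f j (zv j))"
    using prob_space_q integrable_f by (intro integrable_PiM_sum_components) auto
  note AE_eq = measurable borel_measurable_integrable[OF integrable_sum] AE_ln_post_joint_eq_sum[OF assms]
  show "integrable ?M (\<lambda>zv. ln (post_joint J K lik pc zv c))"
    using integrable_cong_AE[OF AE_eq] integrable_sum by simp
  have "(\<integral>zv. ln (post_joint J K lik pc zv c) \<partial>?M) = (\<integral>zv. (\<Sum>j<J. ?f j (zv j)) \<partial>?M)"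
    using AE_eq by (rule integral_cong_AE)
  also have "\<dots> = (\<Sum>j<J. expected_ln_post_j j (c j))"
    using prob_space_q integrable_f
    by (subst integral_PiM_sum_components) (auto simp: expected_ln_post_j_def)
  finally show "(\<integral>zv. ln (post_joint J K lik pc zv c) \<partial>?M) = (\<Sum>j<J. expected_ln_post_j j (c j))" .
qed

lemma AE_KL_fin_post_joint_eq:
  assumes "\<And>c. c \<in> config_set J K \<Longrightarrow> 0 \<le> Q c"
  shows "AE zv in PiM {0..<J} q. KL_fin (config_set J K) Q (post_joint J K lik pc zv) =
    (\<Sum>c\<in>config_set J K. Q c * ln (Q c)) - (\<Sum>c\<in>config_set J K. Q c * ln (post_joint J K lik pc zv c))"
  using AE_post_j_pos_components
proof eventually_elim
  case (elim zv)
  have "0 < post_joint J K lik pc zv c" if "c \<in> config_set J K" for c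
    unfolding post_joint_eq_prod_post_j using elim config_set_component[OF that] by (intro prod_pos) auto
  with assms show ?case
    by (rule KL_fin_eq_diff_cross_entropy)
qed

lemma objective_eq_diff_cross_entropy:
  assumes "\<And>c. c \<in> config_set J K \<Longrightarrow> 0 \<le> Q c"
  shows "objective J K lik pc q Q = (\<Sum>c\<in>config_set J K. Q c * ln (Q c))
    - (\<Sum>c\<in>config_set J K. Q c * (\<Sum>j<J. expected_ln_post_j j (c j)))"
proof -
  let ?C = "config_set J K" and ?M = "PiM {0..<J} q"
  let ?ln_post = "\<lambda>c zv. ln (post_joint J K lik pc zv c)"
  interpret M: prob_space ?M
    by (rule prob_space_PiM_q)
  have integrable_cross: "integrable ?M (\<lambda>zv. \<Sum>c\<in>?C. Q c * ?ln_post c zv)"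
    using integrable_ln_post_joint by (intro Bochner_Integration.integrable_sum integrable_mult_right) auto
  have "objective J K lik pc q Q = (\<integral>zv. KL_fin ?C Q (post_joint J K lik pc zv) \<partial>?M)"
    unfolding objective_def ..
  also have "\<dots> = (\<integral>zv. (\<Sum>c\<in>?C. Q c * ln (Q c)) - (\<Sum>c\<in>?C. Q c * ?ln_post c zv) \<partial>?M)"
  proof (rule integral_cong_AE)
    show "(\<lambda>zv. KL_fin ?C Q (post_joint J K lik pc zv)) \<in> borel_measurable ?M"
      unfolding KL_fin_def
      by (intro borel_measurable_sum borel_measurable_times borel_measurable_const borel_measurable_ln
          borel_measurable_divide measurable_post_joint)
    show "(\<lambda>zv. (\<Sum>c\<in>?C. Q c * ln (Q c)) - (\<Sum>c\<in>?C. Q c * ?ln_post c zv)) \<in> borel_measurable ?M"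
      using integrable_cross by measurable
  qed (rule AE_KL_fin_post_joint_eq[OF assms])
  also have "\<dots> = (\<Sum>c\<in>?C. Q c * ln (Q c)) - (\<Sum>c\<in>?C. Q c * (\<integral>zv. ?ln_post c zv \<partial>?M))"
    using integrable_cross integrable_ln_post_joint
    by (simp add: Bochner_Integration.integral_diff Bochner_Integration.integral_sum M.prob_space)
  finally show ?thesis
    by (simp add: integral_ln_post_joint cong: sum.cong)
qed

lemma objective_eq_KL_mean_field:
  assumes "is_distr (config_set J K) Q"
  shows "objective J K lik pc q Q = KL_fin (config_set J K) Q mean_field - log_normaliser"
proof -
  let ?C = "config_set J K" and ?E = "\<lambda>c. \<Sum>j<J. expected_ln_post_j j (c j)"
  have Q_nonneg: "\<And>c. c \<in> ?C \<Longrightarrow> 0 \<le> Q c" and Q_sum: "sum Q ?C = 1"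
    using assms unfolding is_distr_def by auto
  have "KL_fin ?C Q mean_field = (\<Sum>c\<in>?C. Q c * ln (Q c)) - (\<Sum>c\<in>?C. Q c * ln (mean_field c))"
    using Q_nonneg mean_field_pos by (rule KL_fin_eq_diff_cross_entropy)
  also have "\<dots> = (\<Sum>c\<in>?C. Q c * ln (Q c)) - (\<Sum>c\<in>?C. Q c * ?E c - Q c * log_normaliser)"
    by (simp add: ln_mean_field right_diff_distrib)
  also have "\<dots> = objective J K lik pc q Q + log_normaliser"
    using Q_sum by (simp add: objective_eq_diff_cross_entropy[OF Q_nonneg] sum_subtractf flip: sum_distrib_right)
  finally show ?thesis
    by simp
qed

end

theorem theorem2:
  fixes J :: nat and K :: "nat \<Rightarrow> nat"
    and lik :: "nat \<Rightarrow> nat \<Rightarrow> 'a \<Rightarrow> real"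
    and pc :: "nat \<Rightarrow> nat \<Rightarrow> real"
    and q :: "nat \<Rightarrow> 'a measure"
  assumes J: "J \<ge> 1"
    and K: "\<And>j. j < J \<Longrightarrow> K j \<ge> 1"
    and prior: "\<And>j. j < J \<Longrightarrow> is_distr {1..K j} (pc j)"
    and lik_meas: "\<And>j c. j < J \<Longrightarrow> c \<in> {1..K j} \<Longrightarrow> lik j c \<in> borel_measurable (q j)"
    and lik_nonneg: "\<And>j c z. j < J \<Longrightarrow> c \<in> {1..K j} \<Longrightarrow> z \<in> space (q j) \<Longrightarrow> 0 \<le> lik j c z"
    and q_prob: "\<And>j. j < J \<Longrightarrow> prob_space (q j)"
    and post_pos: "\<And>j c. j < J \<Longrightarrow> c \<in> {1..K j} \<Longrightarrow>
                     AE z in q j. 0 < post_j K lik pc j c z"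
    and finite_exp: "\<And>j c. j < J \<Longrightarrow> c \<in> {1..K j} \<Longrightarrow>
                     integrable (q j) (\<lambda>z. ln (post_j K lik pc j c z))"
  shows "is_distr (config_set J K) (\<lambda>c. \<Prod>j<J. pij K lik pc q j (c j))
    \<and> (\<forall>Q. is_distr (config_set J K) Q \<longrightarrow>
          objective J K lik pc q (\<lambda>c. \<Prod>j<J. pij K lik pc q j (c j))
            \<le> objective J K lik pc q Q)
    \<and> objective J K lik pc q (\<lambda>c. \<Prod>j<J. pij K lik pc q j (c j))
        = - (\<Sum>j<J. ln (Zj K lik pc q j))"
proof -
  interpret factorised_posterior J K lik pc q
    using K lik_meas q_prob post_pos finite_exp by (simp add: factorised_posterior_def)
  have mean_field: "(\<lambda>c. \<Prod>j<J. pij K lik pc q j (c j)) = mean_field"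
    by (simp add: mean_field_def fun_eq_iff)
  have minimum: "objective J K lik pc q mean_field = - log_normaliser"
    using objective_eq_KL_mean_field[OF mean_field_is_distr] by (simp add: KL_fin_self)
  have "objective J K lik pc q mean_field \<le> objective J K lik pc q Q"
    if "is_distr (config_set J K) Q" for Q
    using KL_fin_nonneg[OF finite_config_set that mean_field_pos] mean_field_is_distr
    by (simp add: objective_eq_KL_mean_field[OF that] minimum is_distr_def)
  then show ?thesis
    unfolding mean_field using mean_field_is_distr minimum by blast
qed

end
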